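(* Let $W:\mathbb{N}^\star\times\mathbb{N}^\star\to\mathbb{C}$. Then $(\mathbb{M},\square_W,\times)$ is a commutative ring (with $\square_W$ as addition and pointwise product $\times$ as multiplication) if and only if $W(a,b)=1$ when $\gcd(a,b)=1$ and $W(a,b)=0$ otherwise.
   Context: $\mathbb{M}$ is the set of functions $F:\mathbb{N}^\star\to\mathbb{C}$ with $F(1)=1$ and $F(ab)=F(a)F(b)$ whenever $\gcd(a,b)=1$. For a weight $W$, $(F\,\square_W\,G)(m)=\sum_{ab=m}F(a)G(b)W(a,b)$, and $(F\times G)(m)=F(m)G(m)$. Being a commutative ring includes that both operations map $\mathbb{M}\times\mathbb{M}$ into $\mathbb{M}$. *)

theory Defs
  imports Complex_Main "HOL-Algebra.Ring"
begin

text \<open>Arithmetic functions on the positive integers are modelled as functions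
  nat => complex normalised to the value 0 at 0 (0 is not in the domain).\<close>

definition multM :: "(nat \<Rightarrow> complex) set" where
  "multM = {F. F 0 = 0 \<and> F 1 = 1 \<and>
     (\<forall>a b. 0 < a \<longrightarrow> 0 < b \<longrightarrow> coprime a b \<longrightarrow> F (a * b) = F a * F b)}"

definition wconv :: "(nat \<Rightarrow> nat \<Rightarrow> complex) \<Rightarrow> (nat \<Rightarrow> complex) \<Rightarrow> (nat \<Rightarrow> complex) \<Rightarrow> nat \<Rightarrow> complex" where
  "wconv W F G m = (if m = 0 then 0 else
     (\<Sum>a\<in>{a. a dvd m}. F a * G (m div a) * W a (m div a)))"

definition ptimes :: "(nat \<Rightarrow> complex) \<Rightarrow> (nat \<Rightarrow> complex) \<Rightarrow> nat \<Rightarrow> complex" where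
  "ptimes F G m = F m * G m"

definition multM_struct ::
  "(nat \<Rightarrow> nat \<Rightarrow> complex) \<Rightarrow> (nat \<Rightarrow> complex) \<Rightarrow> (nat \<Rightarrow> complex) \<Rightarrow> (nat \<Rightarrow> complex) ring" where
  "multM_struct W z u = \<lparr>carrier = multM, monoid.mult = ptimes, one = u,
                         zero = z, add = wconv W\<rparr>"

end

(*
  For the unitary weight, the divisors d of n with gcd(d, n/d) = 1 are exactly the products of
  full prime-power components of n. Hence F \<box>_W G is again multiplicative, with value
  F(p^k) + G(p^k) at every prime power, so on \<M> both operations act componentwise on the
  prime-power values and the ring axioms are inherited from \<complex>.

  Conversely, the ring axioms are tested on indicator functions of unitary divisors.
  Closure of \<M> under \<box>_W gives W(a,b) = W(a,1) W(1,b) for coprime a, b. Distributivity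
  against 2^\<omega>(n), which satisfies 2^\<omega>(ab) \<noteq> 2^\<omega>(a) 2^\<omega>(b) whenever a and b share a prime,
  gives W(a,b) = 0 for non-coprime a, b. Finally, the neutral element of \<box>_W forces
  W(n,1) = W(1,n) = 1.
*)

theory Submission
  imports Defs "HOL-Computational_Algebra.Primes"
begin

definition from_prime_powers :: "(nat \<Rightarrow> nat \<Rightarrow> complex) \<Rightarrow> nat \<Rightarrow> complex" where
  "from_prime_powers g n =
     (if n = 0 then 0 else \<Prod>p\<in>prime_factors n. g p (multiplicity p n))"

lemma multiplicity_mult_coprime:
  fixes a b :: nat
  assumes "a \<noteq> 0" "b \<noteq> 0" "coprime a b" "p \<in> prime_factors a"
  shows "multiplicity p (a * b) = multiplicity p a"
proof -
  have "prime p" "p dvd a" using assms(4) by auto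
  with assms(3) have "\<not> p dvd b"
    by (metis coprime_common_divisor_nat not_prime_1)
  with \<open>prime p\<close> assms(1,2) show ?thesis
    by (simp add: prime_elem_multiplicity_mult_distrib not_dvd_imp_multiplicity_0)
qed

lemma disjoint_prime_factors_if_coprime:
  fixes a b :: nat
  assumes "coprime a b"
  shows "prime_factors a \<inter> prime_factors b = {}"
  using assms by (auto simp: in_prime_factors_iff dest: coprime_common_divisor_nat)

lemma from_prime_powers_mult:
  fixes a b :: nat
  assumes "a \<noteq> 0" "b \<noteq> 0" "coprime a b"
  shows "from_prime_powers g (a * b) = from_prime_powers g a * from_prime_powers g b"
proof -
  have "from_prime_powers g (a * b) =
      (\<Prod>p\<in>prime_factors a \<union> prime_factors b. g p (multiplicity p (a * b)))"
    using assms by (simp add: from_prime_powers_def prime_factors_product)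
  also have "\<dots> = (\<Prod>p\<in>prime_factors a. g p (multiplicity p (a * b))) *
                  (\<Prod>p\<in>prime_factors b. g p (multiplicity p (a * b)))"
    using disjoint_prime_factors_if_coprime[OF assms(3)] by (intro prod.union_disjoint) auto
  also have "\<dots> = from_prime_powers g a * from_prime_powers g b"
    using multiplicity_mult_coprime[OF assms] multiplicity_mult_coprime[of b a]
    by (simp add: from_prime_powers_def assms mult.commute coprime_commute)
  finally show ?thesis .
qed

lemma from_prime_powers_in_multM: "from_prime_powers g \<in> multM"
  unfolding multM_def by (simp add: from_prime_powers_mult) (simp add: from_prime_powers_def)

lemma from_prime_powers_prime_power [simp]:
  assumes "prime p" "k > 0"
  shows "from_prime_powers g (p ^ k) = g p k"
  using assms by (simp add: from_prime_powers_def prime_factorization_prime_power)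

lemma multM_prod_prime_powers:
  assumes F: "F \<in> multM" and "finite S" and "\<And>p. p \<in> S \<Longrightarrow> prime (p::nat)"
  shows "F (\<Prod>p\<in>S. p ^ e p) = (\<Prod>p\<in>S. F (p ^ e p))"
  using assms(2,3)
proof (induction S rule: finite_induct)
  case empty
  then show ?case using F by (simp add: multM_def)
next
  case (insert q S)
  have "coprime q p" if "p \<in> S" for p
    using insert that by (intro primes_coprime) auto
  then have "coprime (q ^ e q) (\<Prod>p\<in>S. p ^ e p)"
    by (auto intro!: prod_coprime_right)
  moreover have "0 < q ^ e q" "0 < (\<Prod>p\<in>S. p ^ e p)"
    using insert by (simp_all add: prime_gt_0_nat prod_pos)
  ultimately show ?case
    using insert F by (simp add: multM_def)
qed

lemma multM_eq_from_prime_powers: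
  assumes "F \<in> multM"
  shows "F = from_prime_powers (\<lambda>p k. F (p ^ k))"
proof
  fix n
  show "F n = from_prime_powers (\<lambda>p k. F (p ^ k)) n"
  proof (cases "n = 0")
    case True
    then show ?thesis using assms by (simp add: multM_def from_prime_powers_def)
  next
    case False
    then have "F n = F (\<Prod>p\<in>prime_factors n. p ^ multiplicity p n)"
      by (simp add: prod_prime_factors)
    also have "\<dots> = (\<Prod>p\<in>prime_factors n. F (p ^ multiplicity p n))"
      by (rule multM_prod_prime_powers[OF assms]) auto
    finally show ?thesis using False by (simp add: from_prime_powers_def)
  qed
qed

lemma multM_eqI:
  assumes "F \<in> multM" "G \<in> multM"
    and "\<And>p k. prime p \<Longrightarrow> k > 0 \<Longrightarrow> F (p ^ k) = G (p ^ k)"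
  shows "F = G"
proof -
  have "F = from_prime_powers (\<lambda>p k. F (p ^ k))"
    using assms(1) by (rule multM_eq_from_prime_powers)
  also have "\<dots> = from_prime_powers (\<lambda>p k. G (p ^ k))"
    using assms(3) by (auto simp: fun_eq_iff from_prime_powers_def prime_factors_multiplicity
        intro!: prod.cong)
  also have "\<dots> = G"
    using assms(2) by (rule multM_eq_from_prime_powers[symmetric])
  finally show ?thesis .
qed

definition unitary_part :: "nat \<Rightarrow> nat set \<Rightarrow> nat" where
  "unitary_part n S = (\<Prod>p\<in>S. p ^ multiplicity p n)"

lemma multiplicity_unitary_part:
  assumes "S \<subseteq> prime_factors n" "prime q"
  shows "multiplicity q (unitary_part n S) = (if q \<in> S then multiplicity q n else 0)"
  unfolding unitary_part_def
  by (rule multiplicity_prod_prime_powers) (use assms in \<open>auto intro: finite_subset\<close>)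

lemma unitary_part_times_complement:
  assumes "n \<noteq> 0" "S \<subseteq> prime_factors n"
  shows "unitary_part n S * unitary_part n (prime_factors n - S) = n"
  using prod.subset_diff[OF assms(2), of "\<lambda>p. p ^ multiplicity p n"] prod_prime_factors[of n] assms
  by (simp add: unitary_part_def mult.commute)

lemma div_unitary_part:
  assumes "n \<noteq> 0" "S \<subseteq> prime_factors n"
  shows "n div unitary_part n S = unitary_part n (prime_factors n - S)"
  using unitary_part_times_complement[OF assms] assms(1)
  by (metis div_mult_self1_is_m mult_is_0 neq0_conv)

lemma coprime_unitary_part_complement:
  assumes "S \<subseteq> prime_factors n"
  shows "coprime (unitary_part n S) (unitary_part n (prime_factors n - S))"
  unfolding unitary_part_def
  by (intro prod_coprime_left prod_coprime_right) (use assms in \<open>auto intro: primes_coprime\<close>)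

lemma inj_on_unitary_part: "inj_on (unitary_part n) (Pow (prime_factors n))"
proof (rule inj_onI)
  fix S T
  assume S: "S \<in> Pow (prime_factors n)" and T: "T \<in> Pow (prime_factors n)"
    and eq: "unitary_part n S = unitary_part n T"
  have "q \<in> S \<longleftrightarrow> q \<in> T" for q
  proof (cases "q \<in> prime_factors n")
    case True
    then have "prime q" "multiplicity q n > 0" by (auto simp: prime_factors_multiplicity)
    then show ?thesis
      using multiplicity_unitary_part[of S n q] multiplicity_unitary_part[of T n q] S T eq
      by (auto split: if_splits)
  next
    case False
    then show ?thesis using S T by auto
  qed
  then show "S = T" by blast
qed

lemma unitary_divisors_eq_image_unitary_part:
  assumes "n \<noteq> 0"
  shows "{a. a dvd n \<and> coprime a (n div a)} = unitary_part n ` Pow (prime_factors n)"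
proof (intro equalityI subsetI)
  fix a
  assume "a \<in> {a. a dvd n \<and> coprime a (n div a)}"
  then have a: "a dvd n" "coprime a (n div a)" by auto
  then have "a \<noteq> 0" "n div a \<noteq> 0" using assms by auto
  have "multiplicity p a = multiplicity p n" if "p \<in> prime_factors a" for p
    using multiplicity_mult_coprime[OF \<open>a \<noteq> 0\<close> \<open>n div a \<noteq> 0\<close> a(2) that] a(1) by simp
  then have "a = unitary_part n (prime_factors a)"
    using prod_prime_factors[OF \<open>a \<noteq> 0\<close>] by (simp add: unitary_part_def)
  moreover have "prime_factors a \<subseteq> prime_factors n"
    using a(1) assms by (intro dvd_prime_factors) auto
  ultimately show "a \<in> unitary_part n ` Pow (prime_factors n)" by blast
next
  fix a
  assume "a \<in> unitary_part n ` Pow (prime_factors n)"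
  then obtain S where S: "S \<subseteq> prime_factors n" and a: "a = unitary_part n S" by auto
  show "a \<in> {a. a dvd n \<and> coprime a (n div a)}"
    using unitary_part_times_complement[OF assms S] div_unitary_part[OF assms S]
      coprime_unitary_part_complement[OF S] a
    by (metis dvd_triv_left mem_Collect_eq)
qed

definition unitary_weight :: "(nat \<Rightarrow> nat \<Rightarrow> complex) \<Rightarrow> bool" where
  "unitary_weight W \<longleftrightarrow> (\<forall>a b. 0 < a \<longrightarrow> 0 < b \<longrightarrow> W a b = (if coprime a b then 1 else 0))"

lemma wconv_unitary_eq_prod:
  assumes W: "unitary_weight W" and F: "F \<in> multM" and G: "G \<in> multM" and "n \<noteq> 0"
  shows "wconv W F G n =
    (\<Prod>p\<in>prime_factors n. F (p ^ multiplicity p n) + G (p ^ multiplicity p n))"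
proof -
  define P where "P = prime_factors n"
  have weight: "W a (n div a) = (if coprime a (n div a) then 1 else 0)" if "a dvd n" for a
  proof -
    have "0 < a" "0 < n div a"
      using that \<open>n \<noteq> 0\<close> by (auto simp: dvd_div_eq_0_iff intro!: gr0I)
    then show ?thesis using W by (simp add: unitary_weight_def)
  qed
  have "wconv W F G n = (\<Sum>a | a dvd n. F a * G (n div a) * W a (n div a))"
    using \<open>n \<noteq> 0\<close> by (simp add: wconv_def)
  also have "\<dots> = (\<Sum>a | a dvd n \<and> coprime a (n div a). F a * G (n div a))"
    using \<open>n \<noteq> 0\<close> by (intro sum.mono_neutral_cong_right) (auto simp: weight)
  also have "\<dots> = (\<Sum>S\<in>Pow P. F (unitary_part n S) * G (n div unitary_part n S))"
    using \<open>n \<noteq> 0\<close>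
    by (simp add: unitary_divisors_eq_image_unitary_part sum.reindex inj_on_unitary_part P_def)
  also have "\<dots> = (\<Sum>S\<in>Pow P. (\<Prod>p\<in>S. F (p ^ multiplicity p n)) *
                                (\<Prod>p\<in>P - S. G (p ^ multiplicity p n)))"
  proof (rule sum.cong[OF refl])
    fix S
    assume "S \<in> Pow P"
    then have S: "S \<subseteq> prime_factors n" by (simp add: P_def)
    have "F (unitary_part n S) = (\<Prod>p\<in>S. F (p ^ multiplicity p n))"
      unfolding unitary_part_def
      by (rule multM_prod_prime_powers[OF F]) (use S in \<open>auto intro: finite_subset\<close>)
    moreover have "G (unitary_part n (P - S)) = (\<Prod>p\<in>P - S. G (p ^ multiplicity p n))"
      unfolding unitary_part_def by (rule multM_prod_prime_powers[OF G]) (auto simp: P_def)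
    ultimately show "F (unitary_part n S) * G (n div unitary_part n S) =
        (\<Prod>p\<in>S. F (p ^ multiplicity p n)) * (\<Prod>p\<in>P - S. G (p ^ multiplicity p n))"
      using div_unitary_part[OF \<open>n \<noteq> 0\<close> S] by (simp add: P_def)
  qed
  also have "\<dots> = (\<Prod>p\<in>P. F (p ^ multiplicity p n) + G (p ^ multiplicity p n))"
    by (rule prod_add[symmetric]) (simp add: P_def)
  finally show ?thesis by (simp add: P_def)
qed

corollary wconv_unitary_eq_from_prime_powers:
  assumes "unitary_weight W" "F \<in> multM" "G \<in> multM"
  shows "wconv W F G = from_prime_powers (\<lambda>p k. F (p ^ k) + G (p ^ k))"
  using wconv_unitary_eq_prod[OF assms]
  by (auto simp: fun_eq_iff from_prime_powers_def wconv_def)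

lemma multM_struct_simps [simp]:
  "carrier (multM_struct W z u) = multM"
  "ring.add (multM_struct W z u) = wconv W"
  "monoid.mult (multM_struct W z u) = ptimes"
  "ring.zero (multM_struct W z u) = z"
  "monoid.one (multM_struct W z u) = u"
  by (simp_all add: multM_struct_def)

lemma ptimes_in_multM: "F \<in> multM \<Longrightarrow> G \<in> multM \<Longrightarrow> ptimes F G \<in> multM"
  by (simp add: multM_def ptimes_def)

lemma cring_multM_struct_if_unitary:
  assumes W: "unitary_weight W"
  shows "cring (multM_struct W (from_prime_powers (\<lambda>_ _. 0)) (from_prime_powers (\<lambda>_ _. 1)))"
    (is "cring ?R")
proof -
  have wconv: "wconv W F G \<in> multM"
    "prime p \<Longrightarrow> k > 0 \<Longrightarrow> wconv W F G (p ^ k) = F (p ^ k) + G (p ^ k)"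
    if "F \<in> multM" "G \<in> multM" for F G p k
    using wconv_unitary_eq_from_prime_powers[OF W that] from_prime_powers_in_multM by simp_all
  note multM_ring_simps = wconv ptimes_in_multM ptimes_def from_prime_powers_in_multM
  show ?thesis
  proof (rule cringI)
    show "abelian_group ?R"
    proof (rule abelian_groupI, unfold multM_struct_simps)
      fix x
      assume x: "x \<in> multM"
      then show "\<exists>y\<in>multM. wconv W y x = from_prime_powers (\<lambda>_ _. 0)"
        by (intro bexI[of _ "from_prime_powers (\<lambda>p k. - x (p ^ k))"] multM_eqI)
          (simp_all add: multM_ring_simps)
    qed (auto intro!: multM_eqI simp: multM_ring_simps)
    show "comm_monoid ?R"
      by (rule comm_monoidI, unfold multM_struct_simps)
        (auto intro!: multM_eqI simp: multM_ring_simps)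
    show "(x \<oplus>\<^bsub>?R\<^esub> y) \<otimes>\<^bsub>?R\<^esub> z = x \<otimes>\<^bsub>?R\<^esub> z \<oplus>\<^bsub>?R\<^esub> y \<otimes>\<^bsub>?R\<^esub> z"
      if "x \<in> carrier ?R" "y \<in> carrier ?R" "z \<in> carrier ?R" for x y z
      using that by (auto intro!: multM_eqI simp: multM_ring_simps distrib_right)
  qed
qed

definition unitary_divisor_indicator :: "nat \<Rightarrow> nat \<Rightarrow> complex" where
  "unitary_divisor_indicator n = from_prime_powers (\<lambda>p k. if k = multiplicity p n then 1 else 0)"

lemma unitary_divisor_indicator_in_multM: "unitary_divisor_indicator n \<in> multM"
  by (simp add: unitary_divisor_indicator_def from_prime_powers_in_multM)

lemma unitary_divisor_indicator_self: "n \<noteq> 0 \<Longrightarrow> unitary_divisor_indicator n n = 1"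
  by (simp add: unitary_divisor_indicator_def from_prime_powers_def)

lemma dvd_if_unitary_divisor_indicator_nonzero:
  assumes "unitary_divisor_indicator n d \<noteq> 0"
  shows "d dvd n"
proof -
  have "d \<noteq> 0"
    using assms by (auto simp: unitary_divisor_indicator_def from_prime_powers_def split: if_splits)
  have same: "multiplicity p d = multiplicity p n" if "p \<in> prime_factors d" for p
    using assms that by (auto simp: unitary_divisor_indicator_def from_prime_powers_def
        split: if_splits)
  show ?thesis
  proof (rule multiplicity_le_imp_dvd[OF \<open>d \<noteq> 0\<close>])
    fix p :: nat
    assume "prime p"
    then show "multiplicity p d \<le> multiplicity p n"
      using same \<open>d \<noteq> 0\<close>
      by (cases "p dvd d") (auto simp: in_prime_factors_iff not_dvd_imp_multiplicity_0)
  qed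
qed

lemma wconv_eq_single_term:
  assumes "m \<noteq> 0" "c dvd m"
    and "\<And>d. d dvd m \<Longrightarrow> d \<noteq> c \<Longrightarrow> F d * G (m div d) * W d (m div d) = 0"
  shows "wconv W F G m = F c * G (m div c) * W c (m div c)"
proof -
  have "wconv W F G m = (\<Sum>d | d dvd m. F d * G (m div d) * W d (m div d))"
    using assms(1) by (simp add: wconv_def)
  also have "\<dots> = (\<Sum>d\<in>{c}. F d * G (m div d) * W d (m div d))"
    by (rule sum.mono_neutral_right) (use assms in auto)
  finally show ?thesis by simp
qed

lemma wconv_mult_eq_if_supported:
  assumes "a \<noteq> 0" "b \<noteq> 0"
    and F: "\<And>d. F d \<noteq> 0 \<Longrightarrow> d dvd a" and G: "\<And>d. G d \<noteq> 0 \<Longrightarrow> d dvd b"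
  shows "wconv W F G (a * b) = F a * G b * W a b"
proof -
  have "wconv W F G (a * b) = F a * G (a * b div a) * W a (a * b div a)"
  proof (rule wconv_eq_single_term)
    fix d
    assume d: "d dvd a * b" "d \<noteq> a"
    show "F d * G (a * b div d) * W d (a * b div d) = 0"
    proof (rule ccontr)
      assume "\<not> ?thesis"
      then have "d dvd a" "a * b div d dvd b" using F G by auto
      then obtain k where "a = d * k" "k * b dvd b" using \<open>a \<noteq> 0\<close> by (auto elim!: dvdE)
      then show False using d(2) \<open>b \<noteq> 0\<close> by simp
    qed
  qed (use assms in auto)
  then show ?thesis using assms(1) by simp
qed

lemma card_prime_factors_mult_less:
  fixes a b :: nat
  assumes "a \<noteq> 0" "b \<noteq> 0" "\<not> coprime a b"
  shows "card (prime_factors (a * b)) < card (prime_factors a) + card (prime_factors b)"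
proof -
  obtain p where "prime p" "p dvd gcd a b"
    using assms(3) prime_factor_nat[of "gcd a b"] by (auto simp: coprime_iff_gcd_eq_1)
  then have "p \<in> prime_factors a \<inter> prime_factors b"
    using assms by (auto simp: in_prime_factors_iff)
  then have "card (prime_factors a \<inter> prime_factors b) > 0"
    by (auto simp: card_gt_0_iff)
  moreover have "card (prime_factors a) + card (prime_factors b) =
      card (prime_factors a \<union> prime_factors b) + card (prime_factors a \<inter> prime_factors b)"
    by (rule card_Un_Int) auto
  ultimately show ?thesis
    using assms by (simp add: prime_factors_product)
qed

lemma two_power_complex_eq_iff: "(2::complex) ^ m = 2 ^ n \<longleftrightarrow> m = n"
  using of_nat_eq_iff[of "2 ^ m" "2 ^ n", where 'a = complex] by simp

lemma weight_eq_0_if_not_coprime: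
  assumes distrib: "\<And>F G H. F \<in> multM \<Longrightarrow> G \<in> multM \<Longrightarrow> H \<in> multM \<Longrightarrow>
      ptimes (wconv W F G) H = wconv W (ptimes F H) (ptimes G H)"
    and "0 < a" "0 < b" "\<not> coprime a b"
  shows "W a b = 0"
proof -
  define H where "H = from_prime_powers (\<lambda>_ _. 2)"
  define Ua Ub where "Ua = unitary_divisor_indicator a" and "Ub = unitary_divisor_indicator b"
  have supp: "Ua d \<noteq> 0 \<Longrightarrow> d dvd a" "Ub d \<noteq> 0 \<Longrightarrow> d dvd b"
    "ptimes Ua H d \<noteq> 0 \<Longrightarrow> d dvd a" "ptimes Ub H d \<noteq> 0 \<Longrightarrow> d dvd b" for d
    by (auto simp: Ua_def Ub_def ptimes_def dvd_if_unitary_divisor_indicator_nonzero)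
  have self: "Ua a = 1" "Ub b = 1"
    using assms(2,3) by (simp_all add: Ua_def Ub_def unitary_divisor_indicator_self)
  have "W a b * H (a * b) = ptimes (wconv W Ua Ub) H (a * b)"
    using wconv_mult_eq_if_supported[of a b Ua Ub W] supp(1,2) self assms(2,3)
    by (simp add: ptimes_def)
  also have "\<dots> = wconv W (ptimes Ua H) (ptimes Ub H) (a * b)"
    using distrib[of Ua Ub H]
    by (simp add: Ua_def Ub_def H_def unitary_divisor_indicator_in_multM from_prime_powers_in_multM)
  also have "\<dots> = W a b * (H a * H b)"
    using wconv_mult_eq_if_supported[of a b "ptimes Ua H" "ptimes Ub H" W] supp(3,4) self assms(2,3)
    by (simp add: ptimes_def)
  finally have "W a b * (H (a * b) - H a * H b) = 0"
    by (simp add: algebra_simps)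
  moreover have "H (a * b) \<noteq> H a * H b"
    using card_prime_factors_mult_less[of a b] assms(2-4)
    by (simp add: H_def from_prime_powers_def two_power_complex_eq_iff flip: power_add)
  ultimately show ?thesis by simp
qed

lemma weight_coprime_eq_mult:
  assumes closed: "\<And>F G. F \<in> multM \<Longrightarrow> G \<in> multM \<Longrightarrow> wconv W F G \<in> multM"
    and a: "0 < a" and b: "0 < b" and "coprime a b"
  shows "W a b = W a 1 * W 1 b"
proof -
  define Ua Ub where "Ua = unitary_divisor_indicator a" and "Ub = unitary_divisor_indicator b"
  define C where "C = wconv W Ua Ub"
  have supp: "Ua d \<noteq> 0 \<Longrightarrow> d dvd a" "Ub d \<noteq> 0 \<Longrightarrow> d dvd b" for d
    by (simp_all add: Ua_def Ub_def dvd_if_unitary_divisor_indicator_nonzero)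
  have self: "Ua a = 1" "Ub b = 1" "Ua 1 = 1" "Ub 1 = 1"
    using a b unitary_divisor_indicator_in_multM[of a] unitary_divisor_indicator_in_multM[of b]
    by (simp_all add: Ua_def Ub_def unitary_divisor_indicator_self multM_def)
  have "C \<in> multM"
    unfolding C_def Ua_def Ub_def by (intro closed unitary_divisor_indicator_in_multM)
  then have "C (a * b) = C a * C b"
    using a b \<open>coprime a b\<close> by (simp add: multM_def)
  moreover have "C (a * b) = W a b"
    using wconv_mult_eq_if_supported[of a b Ua Ub W] supp self a b by (simp add: C_def)
  moreover have "C a = W a 1"
  proof -
    have "C a = Ua a * Ub (a div a) * W a (a div a)"
      unfolding C_def
    proof (rule wconv_eq_single_term)
      fix d
      assume d: "d dvd a" "d \<noteq> a"
      have "a div d \<noteq> 1" "a div d dvd a"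
        using d a by (auto elim!: dvdE)
      then have "\<not> a div d dvd b"
        using \<open>coprime a b\<close> coprime_common_divisor_nat by blast
      then show "Ua d * Ub (a div d) * W d (a div d) = 0" using supp(2) by auto
    qed (use a in auto)
    then show ?thesis using self a by simp
  qed
  moreover have "C b = W 1 b"
  proof -
    have "C b = Ua 1 * Ub (b div 1) * W 1 (b div 1)"
      unfolding C_def
    proof (rule wconv_eq_single_term)
      fix d
      assume "d dvd b" "d \<noteq> 1"
      then have "\<not> d dvd a" using \<open>coprime a b\<close> coprime_common_divisor_nat by blast
      then show "Ua d * Ub (b div d) * W d (b div d) = 0" using supp(1) by auto
    qed (use b in auto)
    then show ?thesis using self by simp
  qed
  ultimately show ?thesis by simp
qed

lemma wconv_transpose: "wconv (\<lambda>a b. W b a) G F = wconv W F G"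
proof
  fix m
  show "wconv (\<lambda>a b. W b a) G F m = wconv W F G m"
  proof (cases "m = 0")
    case False
    have "m div (m div d) = d" if "d dvd m" for d
      using that False by (auto elim!: dvdE)
    then show ?thesis
      unfolding wconv_def
      by (auto intro!: sum.reindex_bij_witness[of _ "\<lambda>d. m div d" "\<lambda>d. m div d"])
  qed (simp add: wconv_def)
qed

lemma weight_right_one_eq_1:
  assumes z: "z \<in> multM" and right_neutral: "\<And>F. F \<in> multM \<Longrightarrow> wconv W F z = F"
    and not_coprime: "\<And>a b. 0 < a \<Longrightarrow> 0 < b \<Longrightarrow> \<not> coprime a b \<Longrightarrow> W a b = 0"
    and coprime: "\<And>a b. 0 < a \<Longrightarrow> 0 < b \<Longrightarrow> coprime a b \<Longrightarrow> W a b = W a 1 * W 1 b"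
    and "0 < n"
  shows "W n 1 = 1"
proof -
  have zero_weight: "z e * W 1 e = 0" if "1 < e" for e
  proof -
    define \<delta> where "\<delta> = unitary_divisor_indicator 1"
    have \<delta>: "\<delta> d \<noteq> 0 \<Longrightarrow> d = 1" "\<delta> 1 = 1" for d
      using dvd_if_unitary_divisor_indicator_nonzero[of 1 d]
      by (simp_all add: \<delta>_def unitary_divisor_indicator_self)
    have "\<delta> e = wconv W \<delta> z e"
      using right_neutral[OF unitary_divisor_indicator_in_multM] by (simp add: \<delta>_def)
    also have "\<dots> = \<delta> 1 * z (e div 1) * W 1 (e div 1)"
      by (rule wconv_eq_single_term) (use that \<delta> in auto)
    moreover have "\<delta> e = 0" using \<delta>(1)[of e] that by auto
    ultimately show ?thesis using \<delta>(2) by simp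
  qed
  define U where "U = unitary_divisor_indicator n"
  have "U n = wconv W U z n"
    using right_neutral[OF unitary_divisor_indicator_in_multM] by (simp add: U_def)
  also have "\<dots> = U n * z (n div n) * W n (n div n)"
  proof (rule wconv_eq_single_term)
    fix d
    assume d: "d dvd n" "d \<noteq> n"
    define e where "e = n div d"
    have "0 < d" "1 < e"
      using d \<open>0 < n\<close> by (auto simp: e_def elim!: dvdE intro!: gr0I)
    have "z e * W d e = 0"
    proof (cases "coprime d e")
      case True
      then show ?thesis
        using coprime[of d e] zero_weight[of e] \<open>0 < d\<close> \<open>1 < e\<close> by auto
    next
      case False
      then show ?thesis using not_coprime[of d e] \<open>0 < d\<close> \<open>1 < e\<close> by simp
    qed
    then show "U d * z (n div d) * W d (n div d) = 0" by (simp add: e_def)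
  qed (use \<open>0 < n\<close> in auto)
  finally show ?thesis
    using z \<open>0 < n\<close> by (simp add: U_def unitary_divisor_indicator_self multM_def)
qed

lemma unitary_weight_if_cring:
  assumes "cring (multM_struct W z u)"
  shows "unitary_weight W"
proof -
  interpret R: cring "multM_struct W z u" by (rule assms)
  have z: "z \<in> multM"
    using R.zero_closed by simp
  have closed: "wconv W F G \<in> multM" if "F \<in> multM" "G \<in> multM" for F G
    using R.a_closed[of F G] that by simp
  have distrib: "ptimes (wconv W F G) H = wconv W (ptimes F H) (ptimes G H)"
    if "F \<in> multM" "G \<in> multM" "H \<in> multM" for F G H
    using R.l_distr[of F G H] that by simp
  have not_coprime: "W a b = 0" if "0 < a" "0 < b" "\<not> coprime a b" for a b
    using that by (intro weight_eq_0_if_not_coprime) (simp_all add: distrib)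
  have coprime: "W a b = W a 1 * W 1 b" if "0 < a" "0 < b" "coprime a b" for a b
    using that by (intro weight_coprime_eq_mult) (simp_all add: closed)
  have right_one: "W n 1 = 1" if "0 < n" for n
    using weight_right_one_eq_1[of z W n, OF z _ not_coprime coprime that] R.r_zero by simp
  have left_one: "W 1 n = 1" if "0 < n" for n
  proof -
    \<comment> \<open>the previous step for the transposed weight, whose right neutral element is z\<close>
    have neutral: "wconv (\<lambda>a b. W b a) F z = F" if "F \<in> multM" for F
      using R.l_zero[of F] that by (simp add: wconv_transpose[of W F z])
    have not_coprime': "W b a = 0" if "0 < a" "0 < b" "\<not> coprime a b" for a b
      using not_coprime[of b a] that by (simp add: coprime_commute)
    have coprime': "W b a = W 1 a * W b 1" if "0 < a" "0 < b" "coprime a b" for a b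
      using coprime[of b a] that by (simp add: coprime_commute mult.commute)
    show ?thesis
      using weight_right_one_eq_1[of z "\<lambda>a b. W b a", OF z neutral not_coprime' coprime' \<open>0 < n\<close>] .
  qed
  show ?thesis
    unfolding unitary_weight_def
  proof (intro allI impI)
    fix a b :: nat
    assume "0 < a" "0 < b"
    then show "W a b = (if coprime a b then 1 else 0)"
      using coprime[of a b] not_coprime[of a b] right_one[of a] left_one[of b] by auto
  qed
qed

theorem mainTheorem11:
  fixes W :: "nat \<Rightarrow> nat \<Rightarrow> complex"
  shows "(\<exists>z u. cring (multM_struct W z u)) \<longleftrightarrow>
         (\<forall>a b. 0 < a \<longrightarrow> 0 < b \<longrightarrow> W a b = (if coprime a b then 1 else 0))"
  using unitary_weight_if_cring cring_multM_struct_if_unitary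
  unfolding unitary_weight_def by blast

end
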